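(* For any commutative ring $A$, the following are equivalent: (1) $\Gamma(A)$ is path-connected. (2) For any unimodular row $(a,b)$, there exist $a_0,\ldots,a_n\in A$ such that $[a,b]= \infty\cdot S(a_n)S(a_{n-1})\cdots S(a_0)$. (3) Any unimodular pair $(a,b)$ satisfies a weak Euclidean algorithm. (4) $A$ is a $\mathrm{GE}_2$-ring.
   Context: $\Gamma(A)$ is the graph whose vertices are classes $[a,b]$ of unimodular rows modulo multiplication by units, with an edge between $[u],[v]$ when the matrix with rows $u,v$ is in $\mathrm{GL}_2(A)$; $\mathrm{GL}_2(A)$ acts on the right, and $\infty$ denotes the class of $(1,0)$. $S(a)=\left[\begin{smallmatrix}a&1\\1&0\end{smallmatrix}\right]$. A pair $(a,b)$ satisfies a weak Euclidean algorithm if there exist $a_0,\ldots,a_n,r_0,\ldots,r_{n-1}\in A$ such that, with $r_{-2}:=a$, $r_{-1}:=b$, $r_n:=0$, one has $r_{k-2}=a_kr_{k-1}+r_k$ for $0\le k\le n$. $A$ is a $\mathrm{GE}_2$-ring if $\mathrm{GL}_2(A)$ is generated by elementary and invertible diagonal matrices. *)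

theory Defs
  imports Main
begin

text \<open>2x2 matrices over a commutative ring: M2 p q r s has rows (p,q) and (r,s).\<close>
datatype 'a m2 = M2 'a 'a 'a 'a

fun m2_mult :: "'a::comm_ring_1 m2 \<Rightarrow> 'a m2 \<Rightarrow> 'a m2" where
  "m2_mult (M2 p q r s) (M2 p' q' r' s') =
     M2 (p*p' + q*r') (p*q' + q*s') (r*p' + s*r') (r*q' + s*s')"

definition m2_id :: "'a::comm_ring_1 m2" where
  "m2_id = M2 1 0 0 1"

definition in_GL2 :: "'a::comm_ring_1 m2 \<Rightarrow> bool" where
  "in_GL2 M \<longleftrightarrow> (\<exists>N. m2_mult M N = m2_id \<and> m2_mult N M = m2_id)"

fun rows_mat :: "'a \<times> 'a \<Rightarrow> 'a \<times> 'a \<Rightarrow> 'a m2" where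
  "rows_mat (p, q) (r, s) = M2 p q r s"

fun row_act :: "'a::comm_ring_1 \<times> 'a \<Rightarrow> 'a m2 \<Rightarrow> 'a \<times> 'a" where
  "row_act (x, y) (M2 p q r s) = (x*p + y*r, x*q + y*s)"

definition unimodular :: "'a::comm_ring_1 \<times> 'a \<Rightarrow> bool" where
  "unimodular u \<longleftrightarrow> (\<exists>x y. x * fst u + y * snd u = 1)"

definition row_class :: "'a::comm_ring_1 \<times> 'a \<Rightarrow> ('a \<times> 'a) set" where
  "row_class u = {v. \<exists>c. c dvd 1 \<and> v = (c * fst u, c * snd u)}"

definition Gamma_vertices :: "('a::comm_ring_1 \<times> 'a) set set" where
  "Gamma_vertices = {row_class u | u. unimodular u}"

definition Gamma_edge :: "('a::comm_ring_1 \<times> 'a) set \<Rightarrow> ('a \<times> 'a) set \<Rightarrow> bool" where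
  "Gamma_edge X Y \<longleftrightarrow> X \<in> Gamma_vertices \<and> Y \<in> Gamma_vertices \<and>
     (\<exists>u\<in>X. \<exists>v\<in>Y. in_GL2 (rows_mat u v))"

definition Gamma_path_connected :: "'a::comm_ring_1 itself \<Rightarrow> bool" where
  "Gamma_path_connected _ \<longleftrightarrow>
     (\<forall>X\<in>(Gamma_vertices :: ('a \<times> 'a) set set). \<forall>Y\<in>Gamma_vertices. Gamma_edge\<^sup>*\<^sup>* X Y)"

definition S_mat :: "'a::comm_ring_1 \<Rightarrow> 'a m2" where
  "S_mat a = M2 a 1 1 0"

text \<open>prodS [a0, ..., an] = S(an) S(a(n-1)) ... S(a0).\<close>
fun prodS :: "'a::comm_ring_1 list \<Rightarrow> 'a m2" where
  "prodS [] = m2_id"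
| "prodS (x # xs) = m2_mult (prodS xs) (S_mat x)"

definition infty_row :: "'a::comm_ring_1 \<times> 'a" where
  "infty_row = (1, 0)"

text \<open>Weak Euclidean algorithm, with the index shift R k = r_(k-2):
  R 0 = a = r_(-2), R 1 = b = r_(-1), R (n+2) = r_n = 0, and q k = a_k.\<close>
definition weak_euclid :: "'a::comm_ring_1 \<Rightarrow> 'a \<Rightarrow> bool" where
  "weak_euclid a b \<longleftrightarrow> (\<exists>(n::nat) (q::nat \<Rightarrow> 'a) (R::nat \<Rightarrow> 'a).
      R 0 = a \<and> R 1 = b \<and> R (n + 2) = 0 \<and>
      (\<forall>k\<le>n. R k = q k * R (k + 1) + R (k + 2)))"

definition elem12 :: "'a::comm_ring_1 \<Rightarrow> 'a m2" where
  "elem12 x = M2 1 x 0 1"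

definition elem21 :: "'a::comm_ring_1 \<Rightarrow> 'a m2" where
  "elem21 x = M2 1 0 x 1"

inductive_set E_D_generated :: "'a::comm_ring_1 m2 set" where
  gen_id: "m2_id \<in> E_D_generated"
| gen_e12: "elem12 x \<in> E_D_generated"
| gen_e21: "elem21 x \<in> E_D_generated"
| gen_diag: "u dvd 1 \<Longrightarrow> v dvd 1 \<Longrightarrow> M2 u 0 0 v \<in> E_D_generated"
| gen_mult: "M \<in> E_D_generated \<Longrightarrow> N \<in> E_D_generated \<Longrightarrow> m2_mult M N \<in> E_D_generated"
| gen_inv: "M \<in> E_D_generated \<Longrightarrow> m2_mult M N = m2_id \<Longrightarrow> m2_mult N M = m2_id
             \<Longrightarrow> N \<in> E_D_generated"

definition GE2_ring :: "'a::comm_ring_1 itself \<Rightarrow> bool" where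
  "GE2_ring _ \<longleftrightarrow> (\<forall>M :: 'a m2. in_GL2 M \<longrightarrow> M \<in> E_D_generated)"

end

theory Submission
  imports Defs
begin

text \<open>
  All four conditions are equivalent to: the class of every unimodular row lies in the orbit
  \<open>\<infinity> \<cdot> P\<close>, where \<open>P\<close> ranges over the products of the matrices \<open>S(a)\<close> (themselves
  invertible, as \<open>S(a)\<^sup>-\<^sup>1 = S(0) S(-a) S(0)\<close>).
  The common tool is that a matrix of \<open>GL\<^sub>2(A)\<close> with first row \<open>(c, 0)\<close> is lower triangular
  with unit diagonal.
  Applied to \<open>[u, v] P\<^sup>-\<^sup>1\<close> it shows that the neighbours of \<open>\<infinity> \<cdot> P\<close> in \<open>\<Gamma>(A)\<close> are
  exactly the vertices \<open>\<infinity> \<cdot> S(x) P\<close>, so the component of \<open>\<infinity>\<close> is the orbit.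
  A division step \<open>r\<^sub>k\<^sub>-\<^sub>2 = a\<^sub>k r\<^sub>k\<^sub>-\<^sub>1 + r\<^sub>k\<close> says
  \<open>(r\<^sub>k\<^sub>-\<^sub>2, r\<^sub>k\<^sub>-\<^sub>1) = (r\<^sub>k\<^sub>-\<^sub>1, r\<^sub>k) S(a\<^sub>k)\<close>, so a weak Euclidean
  algorithm for \<open>(a, b)\<close> is the same as a factorisation
  \<open>(a, b) = (c, 0) S(a\<^sub>n) \<cdots> S(a\<^sub>0)\<close>.
  Finally, elementary matrices are products of \<open>S\<close>'s and
  \<open>S(x) diag(u, v) = diag(v, u) S(x u v\<^sup>-\<^sup>1)\<close>, so the subgroup generated by elementary and invertible diagonal matrices is \<open>{D P}\<close>; by the
  lower triangular argument, \<open>M \<in> GL\<^sub>2(A)\<close> has this form iff its first row lies in the orbit.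
\<close>

lemma m2_mult_assoc: "m2_mult (m2_mult A B) C = m2_mult A (m2_mult B C)"
  by (cases A; cases B; cases C) (simp add: algebra_simps)

lemma m2_mult_id_left [simp]: "m2_mult m2_id A = A"
  by (cases A) (simp add: m2_id_def)

lemma m2_mult_id_right [simp]: "m2_mult A m2_id = A"
  by (cases A) (simp add: m2_id_def)

lemma m2_inverse_unique: "m2_mult N M = m2_id \<Longrightarrow> m2_mult M N' = m2_id \<Longrightarrow> N = N'"
  by (metis m2_mult_assoc m2_mult_id_left m2_mult_id_right)

lemma row_act_m2_mult: "row_act v (m2_mult M N) = row_act (row_act v M) N"
  by (cases v; cases M; cases N) (simp add: algebra_simps)

lemma row_act_m2_id [simp]: "row_act v m2_id = v"
  by (cases v) (simp add: m2_id_def)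

lemma rows_mat_row_act: "rows_mat (row_act u M) (row_act v M) = m2_mult (rows_mat u v) M"
  by (cases u; cases v; cases M) simp

lemma row_act_S_mat: "row_act (x, y) (S_mat a) = (x * a + y, x)"
  by (simp add: S_mat_def)

fun det2 :: "'a::comm_ring_1 m2 \<Rightarrow> 'a" where
  "det2 (M2 p q r s) = p * s - q * r"

lemma det2_m2_mult: "det2 (m2_mult A B) = det2 A * det2 B"
  by (cases A; cases B) (simp add: algebra_simps)

lemma in_GL2_det2_unit: "in_GL2 M \<Longrightarrow> det2 M dvd 1"
  unfolding in_GL2_def by (metis det2_m2_mult det2.simps m2_id_def dvd_triv_left
      diff_zero mult_1 mult_zero_left)

lemma in_GL2_m2_mult: "in_GL2 M \<Longrightarrow> in_GL2 N \<Longrightarrow> in_GL2 (m2_mult M N)"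
  unfolding in_GL2_def by (metis m2_mult_assoc m2_mult_id_left)

lemma lower_triangular_in_GL2_units:
  assumes "in_GL2 (M2 c 0 r s)"
  shows "c dvd 1" "s dvd 1"
  using in_GL2_det2_unit[OF assms] by (auto dest: dvd_mult_left dvd_mult_right)

lemma unimodular_if_in_GL2_rows:
  assumes "in_GL2 (rows_mat u v)"
  shows "unimodular u"
proof -
  obtain N where "m2_mult (rows_mat u v) N = m2_id" using assms unfolding in_GL2_def by blast
  then show ?thesis unfolding unimodular_def
    by (cases u; cases v; cases N) (auto simp: m2_id_def mult.commute)
qed

lemma unit_mult: "a dvd 1 \<Longrightarrow> b dvd 1 \<Longrightarrow> a * b dvd (1::'a::comm_semiring_1)"
  using mult_dvd_mono[of a 1 b 1] by simp

definition row_scale :: "'a::comm_ring_1 \<Rightarrow> 'a \<times> 'a \<Rightarrow> 'a \<times> 'a" where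
  "row_scale c u = (c * fst u, c * snd u)"

lemma row_scale_row_scale: "row_scale c (row_scale d u) = row_scale (c * d) u"
  by (simp add: row_scale_def mult.assoc)

lemma row_scale_row_act: "row_scale c (row_act u M) = row_act (row_scale c u) M"
  by (cases u; cases M) (simp add: row_scale_def algebra_simps)

lemma row_class_self: "u \<in> row_class u"
  unfolding row_class_def by (auto intro: exI[of _ 1])

lemma row_class_eq_iff: "row_class u = row_class v \<longleftrightarrow> (\<exists>c. c dvd 1 \<and> u = row_scale c v)"
proof
  assume "row_class u = row_class v"
  with row_class_self[of u] show "\<exists>c. c dvd 1 \<and> u = row_scale c v"
    by (auto simp: row_class_def row_scale_def)
next
  assume "\<exists>c. c dvd 1 \<and> u = row_scale c v"
  then obtain c d where c: "u = row_scale c v" "c * d = 1"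
    by (auto elim: dvdE simp: eq_commute[of 1])
  then have v: "v = row_scale d u"
    by (simp add: row_scale_row_scale mult.commute) (simp add: row_scale_def)
  have "row_class (row_scale e w) \<subseteq> row_class w" if "e dvd 1" for e and w :: "'a \<times> 'a"
  proof
    fix x assume "x \<in> row_class (row_scale e w)"
    then obtain c where "c dvd 1" "x = row_scale (c * e) w"
      by (auto simp: row_class_def row_scale_def mult.assoc)
    then show "x \<in> row_class w"
      using that unit_mult[of c e] unfolding row_class_def row_scale_def by blast
  qed
  then show "row_class u = row_class v"
    using c v by (metis dvdI mult.commute subset_antisym)
qed

lemma row_class_eq_if_mem: "v \<in> row_class w \<Longrightarrow> row_class v = row_class w"
  unfolding row_class_eq_iff by (auto simp: row_class_def row_scale_def)

lemma row_class_row_scale: "c dvd 1 \<Longrightarrow> row_class (row_scale c u) = row_class u"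
  using row_class_eq_iff by blast

lemma unit_if_unimodular_row_scale: "unimodular (row_scale c u) \<Longrightarrow> c dvd 1"
  unfolding unimodular_def row_scale_def
  by (metis (no_types) dvdI fst_conv snd_conv mult.left_commute distrib_left)

lemma unimodular_infty_row: "unimodular infty_row"
  unfolding unimodular_def infty_row_def by (auto intro: exI[of _ 1])

lemma row_scale_infty_row [simp]: "row_scale c infty_row = (c, 0)"
  by (simp add: row_scale_def infty_row_def)

lemma row_act_infty_row: "row_act infty_row (M2 p q r s) = (p, q)"
  by (simp add: infty_row_def)

lemma prodS_append: "prodS (xs @ ys) = m2_mult (prodS ys) (prodS xs)"
  by (induction xs) (auto simp: m2_mult_assoc)

lemma prodS_pad_zeros: "prodS (as @ [0, 0]) = prodS as"
proof -
  have "prodS [0, 0] = (m2_id :: 'a m2)"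
    by (simp add: S_mat_def m2_id_def)
  then show ?thesis
    by (simp add: prodS_append)
qed

lemma prodS_elem21: "prodS [x, 0] = elem21 x"
  by (simp add: S_mat_def m2_id_def elem21_def)

lemma prodS_elem12: "prodS [0, x] = elem12 x"
  by (simp add: S_mat_def m2_id_def elem12_def)

fun invS :: "'a::comm_ring_1 list \<Rightarrow> 'a list" where
  "invS [] = []"
| "invS (x # xs) = invS xs @ [0, - x, 0]"

lemma prodS_invS:
  "m2_mult (prodS as) (prodS (invS as)) = m2_id" "m2_mult (prodS (invS as)) (prodS as) = m2_id"
proof -
  have S_inv:
    "m2_mult (S_mat x) (m2_mult (S_mat 0) (m2_mult (S_mat (- x)) (m2_mult (S_mat 0) Y))) = Y"
    "m2_mult (S_mat 0) (m2_mult (S_mat (- x)) (m2_mult (S_mat 0) (m2_mult (S_mat x) Y))) = Y"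
    for x :: 'a and Y
    by (cases Y; simp add: S_mat_def m2_id_def algebra_simps)+
  have "m2_mult (prodS as) (m2_mult (prodS (invS as)) Y) = Y \<and>
      m2_mult (prodS (invS as)) (m2_mult (prodS as) Y) = Y" for Y
    by (induction as arbitrary: Y) (simp_all add: prodS_append m2_mult_assoc S_inv)
  from this[of m2_id] show
    "m2_mult (prodS as) (prodS (invS as)) = m2_id" "m2_mult (prodS (invS as)) (prodS as) = m2_id"
    by simp_all
qed

lemma in_GL2_prodS: "in_GL2 (prodS as)"
  unfolding in_GL2_def using prodS_invS by blast

lemma in_GL2_rows_mat_swap: "in_GL2 (rows_mat u v) \<Longrightarrow> in_GL2 (rows_mat v u)"
proof -
  have "rows_mat v u = m2_mult (prodS [0]) (rows_mat u v)"
    by (cases u; cases v) (simp add: S_mat_def m2_id_def)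
  then show "in_GL2 (rows_mat u v) \<Longrightarrow> in_GL2 (rows_mat v u)"
    using in_GL2_m2_mult in_GL2_prodS by metis
qed

lemma Gamma_edge_if_in_GL2:
  assumes "in_GL2 (rows_mat u v)"
  shows "Gamma_edge (row_class u) (row_class v)"
proof -
  have "unimodular u" "unimodular v"
    using assms in_GL2_rows_mat_swap unimodular_if_in_GL2_rows by blast+
  then show ?thesis
    unfolding Gamma_edge_def Gamma_vertices_def using assms row_class_self by blast
qed

lemma symp_Gamma_edge: "symp Gamma_edge"
  unfolding symp_def Gamma_edge_def using in_GL2_rows_mat_swap by blast

lemma Gamma_edge_prodS_snoc:
  "Gamma_edge (row_class (row_act infty_row (prodS as)))
     (row_class (row_act infty_row (prodS (as @ [x]))))"
proof -
  have "rows_mat (row_act infty_row (prodS as)) (row_act infty_row (prodS (as @ [x]))) =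
      m2_mult (rows_mat infty_row (row_act infty_row (S_mat x))) (prodS as)"
    by (simp add: prodS_append row_act_m2_mult rows_mat_row_act)
  also have "\<dots> = prodS (as @ [x, 0])"
    by (simp add: prodS_append infty_row_def row_act_S_mat) (simp add: S_mat_def m2_id_def)
  finally show ?thesis
    using Gamma_edge_if_in_GL2 in_GL2_prodS by metis
qed

lemma Gamma_edge_from_infty_prodS:
  assumes "Gamma_edge (row_class (row_act infty_row (prodS as))) Z"
  shows "\<exists>x. Z = row_class (row_act infty_row (prodS (as @ [x])))"
proof -
  define P where "P = prodS as"
  define Q where "Q = prodS (invS as)"
  have PQ: "m2_mult P Q = m2_id" "m2_mult Q P = m2_id"
    unfolding P_def Q_def using prodS_invS by auto
  obtain u v where u: "u \<in> row_class (row_act infty_row P)" and Z: "Z = row_class v"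
    and uv: "in_GL2 (rows_mat u v)"
    using assms row_class_eq_if_mem unfolding Gamma_edge_def Gamma_vertices_def P_def by blast
  obtain c where c: "u = row_scale c (row_act infty_row P)"
    using u by (auto simp: row_class_def row_scale_def)
  obtain r s where rs: "row_act v Q = (r, s)"
    by (cases "row_act v Q")
  have "row_act u Q = (c, 0)"
    by (simp add: c row_scale_row_act PQ flip: row_act_m2_mult)
  then have "in_GL2 (M2 c 0 r s)"
    using in_GL2_m2_mult[OF uv in_GL2_prodS, of "invS as"] rs
    by (simp flip: rows_mat_row_act Q_def)
  then obtain t where t: "s * t = 1"
    using lower_triangular_in_GL2_units(2) by (metis dvdE)
  have "v = row_act (r, s) P"
    by (simp add: PQ flip: rs row_act_m2_mult)
  also have "(r, s) = row_scale s (row_act infty_row (S_mat (r * t)))"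
    using t by (simp add: row_scale_def infty_row_def S_mat_def mult.left_commute)
  finally have "v = row_scale s (row_act infty_row (prodS (as @ [r * t])))"
    by (simp add: row_scale_row_act prodS_append row_act_m2_mult P_def)
  then show ?thesis
    using Z t row_class_row_scale by (metis dvdI)
qed

lemma Gamma_reachable_from_infty_iff:
  "Gamma_edge\<^sup>*\<^sup>* (row_class infty_row) X \<longleftrightarrow>
     (\<exists>as. X = row_class (row_act infty_row (prodS as)))"
proof
  assume "Gamma_edge\<^sup>*\<^sup>* (row_class infty_row) X"
  then show "\<exists>as. X = row_class (row_act infty_row (prodS as))"
  proof (induction rule: rtranclp_induct)
    case base
    then show ?case by (auto intro: exI[of _ "[]"])
  next
    case (step Y Z)
    then show ?case using Gamma_edge_from_infty_prodS by blast
  qed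
next
  have "Gamma_edge\<^sup>*\<^sup>* (row_class infty_row) (row_class (row_act infty_row (prodS as)))" for as
    by (induction as rule: rev_induct)
      (auto intro: rtranclp.rtrancl_into_rtrancl Gamma_edge_prodS_snoc)
  then show "\<exists>as. X = row_class (row_act infty_row (prodS as)) \<Longrightarrow>
      Gamma_edge\<^sup>*\<^sup>* (row_class infty_row) X"
    by blast
qed

definition in_infty_S_orbit :: "'a::comm_ring_1 \<times> 'a \<Rightarrow> bool" where
  "in_infty_S_orbit u \<longleftrightarrow> (\<exists>as. row_class u = row_class (row_act infty_row (prodS as)))"

lemma in_infty_S_orbit_iff_nonempty:
  "in_infty_S_orbit u \<longleftrightarrow>
     (\<exists>as. as \<noteq> [] \<and> row_class u = row_class (row_act infty_row (prodS as)))"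
  unfolding in_infty_S_orbit_def by (metis prodS_pad_zeros append_is_Nil_conv list.distinct(1))

lemma Gamma_path_connected_iff:
  "Gamma_path_connected (T :: 'a::comm_ring_1 itself) \<longleftrightarrow>
     (\<forall>u :: 'a \<times> 'a. unimodular u \<longrightarrow> in_infty_S_orbit u)"
proof
  assume "Gamma_path_connected T"
  then show "\<forall>u :: 'a \<times> 'a. unimodular u \<longrightarrow> in_infty_S_orbit u"
    unfolding Gamma_path_connected_def Gamma_vertices_def in_infty_S_orbit_def
      Gamma_reachable_from_infty_iff[symmetric]
    using unimodular_infty_row by blast
next
  assume orbit: "\<forall>u :: 'a \<times> 'a. unimodular u \<longrightarrow> in_infty_S_orbit u"
  have "Gamma_edge\<^sup>*\<^sup>* (row_class infty_row) X" if "X \<in> Gamma_vertices" for X :: "('a \<times> 'a) set"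
    using that orbit unfolding Gamma_vertices_def in_infty_S_orbit_def
      Gamma_reachable_from_infty_iff by blast
  then show "Gamma_path_connected T"
    unfolding Gamma_path_connected_def
    using sympD[OF symp_rtranclp[OF symp_Gamma_edge]] rtranclp_trans by metis
qed

lemma remainder_pairs_prodS:
  assumes rec: "\<And>k. i \<le> k \<Longrightarrow> k < j \<Longrightarrow> R k = q k * R (Suc k) + R (Suc (Suc k))"
    and "i \<le> j"
  shows "(R i, R (Suc i)) = row_act (R j, R (Suc j)) (prodS (map q [i..<j]))"
  using \<open>i \<le> j\<close>
proof (induction i rule: inc_induct)
  case base
  then show ?case by simp
next
  case (step k)
  have "row_act (R j, R (Suc j)) (prodS (map q [k..<j])) =
      row_act (R (Suc k), R (Suc (Suc k))) (S_mat (q k))"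
    using step.hyps(2) by (simp add: upt_conv_Cons row_act_m2_mult flip: step.IH)
  then show ?case
    using step.hyps rec[of k] by (simp add: row_act_S_mat mult.commute)
qed

lemma weak_euclid_iff_prodS:
  "weak_euclid a b \<longleftrightarrow> (\<exists>c as. as \<noteq> [] \<and> (a, b) = row_act (c, 0) (prodS as))"
proof
  assume "weak_euclid a b"
  then obtain n :: nat and q R where R: "R 0 = a" "R 1 = b" "R (n + 2) = 0"
    and rec: "\<forall>k\<le>n. R k = q k * R (k + 1) + R (k + 2)"
    unfolding weak_euclid_def by blast
  have "(R 0, R 1) = row_act (R (n + 1), R (n + 2)) (prodS (map q [0..<n + 1]))"
    using remainder_pairs_prodS[of 0 "n + 1" R q] rec by simp
  then show "\<exists>c as. as \<noteq> [] \<and> (a, b) = row_act (c, 0) (prodS as)"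
    using R by (intro exI[of _ "R (n + 1)"] exI[of _ "map q [0..<n + 1]"]) simp
next
  assume "\<exists>c as. as \<noteq> [] \<and> (a, b) = row_act (c, 0) (prodS as)"
  then obtain c as where as: "as \<noteq> []" and ab: "(a, b) = row_act (c, 0) (prodS as)"
    by blast
  define V where "V k = row_act (c, 0) (prodS (drop k as))" for k
  define R where "R k = (if k \<le> length as then fst (V k) else 0)" for k
  have V_step: "V k = row_act (V (Suc k)) (S_mat (as ! k))" if "k < length as" for k
    using that by (simp add: V_def Cons_nth_drop_Suc[symmetric] row_act_m2_mult)
  have snd_V: "snd (V k) = R (Suc k)" if "k \<le> length as" for k
  proof (cases "k = length as")
    case True
    then show ?thesis by (simp add: V_def R_def)
  next
    case False
    then show ?thesis
      using that V_step[of k] by (cases "V (Suc k)") (simp add: R_def row_act_S_mat)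
  qed
  have rec: "R k = as ! k * R (k + 1) + R (k + 2)" if "k \<le> length as - 1" for k
  proof -
    have k: "k < length as"
      using that as by (cases as) auto
    then have "R k = fst (V (Suc k)) * as ! k + snd (V (Suc k))"
      using V_step[of k] by (cases "V (Suc k)") (simp add: R_def row_act_S_mat)
    then show ?thesis
      using k snd_V[of "Suc k"] by (simp add: R_def mult.commute)
  qed
  have V0: "V 0 = (a, b)"
    using ab by (simp add: V_def)
  then have "R 0 = a" "R 1 = b"
    using snd_V[of 0] by (simp_all add: R_def)
  moreover have "R (length as - 1 + 2) = 0"
    using as by (cases as) (simp_all add: R_def)
  ultimately show "weak_euclid a b"
    unfolding weak_euclid_def using rec by blast
qed

lemma unimodular_weak_euclid_iff:
  assumes "unimodular (a, b)"
  shows "weak_euclid a b \<longleftrightarrow> in_infty_S_orbit (a, b)"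
proof -
  have scale: "row_act (c, 0) P = row_scale c (row_act infty_row P)" for c :: 'a and P
    by (simp add: row_scale_row_act)
  show ?thesis
    unfolding weak_euclid_iff_prodS in_infty_S_orbit_iff_nonempty row_class_eq_iff scale
    using assms unit_if_unimodular_row_scale by metis
qed

lemma unimodular_row_in_GL2:
  assumes "unimodular (a, b)"
  obtains M where "in_GL2 M" "row_act infty_row M = (a, b)"
proof -
  obtain x y where xy: "x * a + y * b = 1"
    using assms unfolding unimodular_def by auto
  have "m2_mult (M2 a b (- y) x) (M2 x (- b) y a) = m2_id"
    "m2_mult (M2 x (- b) y a) (M2 a b (- y) x) = m2_id"
    using xy by (simp_all add: m2_id_def algebra_simps)
  then have "in_GL2 (M2 a b (- y) x)"
    unfolding in_GL2_def by blast
  then show ?thesis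
    using that by (simp add: row_act_infty_row)
qed

lemma unimodular_first_row_if_in_GL2: "in_GL2 M \<Longrightarrow> unimodular (row_act infty_row M)"
  using unimodular_if_in_GL2_rows[of "(_, _)" "(_, _)"] by (cases M) (simp add: row_act_infty_row)

definition diag_prodS_form :: "'a::comm_ring_1 m2 \<Rightarrow> bool" where
  "diag_prodS_form M \<longleftrightarrow>
     (\<exists>u v as. u dvd 1 \<and> v dvd 1 \<and> M = m2_mult (M2 u 0 0 v) (prodS as))"

lemma diag_prodS_formI:
  "u dvd 1 \<Longrightarrow> v dvd 1 \<Longrightarrow> diag_prodS_form (m2_mult (M2 u 0 0 v) (prodS as))"
  unfolding diag_prodS_form_def by blast

lemma prodS_mult_unit_diag:
  assumes "u dvd 1" "v dvd 1"
  shows "\<exists>u' v' bs. u' dvd 1 \<and> v' dvd 1 \<and>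
    m2_mult (prodS as) (M2 u 0 0 v) = m2_mult (M2 u' 0 0 v') (prodS bs)"
  using assms
proof (induction as arbitrary: u v)
  case Nil
  then show ?case by (intro exI[of _ u] exI[of _ v] exI[of _ "[]"]) simp
next
  case (Cons x xs)
  obtain w where w: "v * w = 1"
    using Cons.prems(2) by (metis dvdE)
  have S_diag: "m2_mult (S_mat x) (M2 u 0 0 v) = m2_mult (M2 v 0 0 u) (S_mat (x * u * w))"
    using w by (simp add: S_mat_def) (metis mult.left_commute mult_1_right)
  obtain u' v' bs where IH: "u' dvd 1" "v' dvd 1"
    "m2_mult (prodS xs) (M2 v 0 0 u) = m2_mult (M2 u' 0 0 v') (prodS bs)"
    using Cons.IH[OF Cons.prems(2,1)] by blast
  have "m2_mult (prodS (x # xs)) (M2 u 0 0 v) =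
      m2_mult (prodS xs) (m2_mult (M2 v 0 0 u) (S_mat (x * u * w)))"
    by (simp add: m2_mult_assoc S_diag)
  also have "\<dots> = m2_mult (M2 u' 0 0 v') (prodS (x * u * w # bs))"
    by (simp add: IH(3) flip: m2_mult_assoc)
  finally show ?case
    using IH(1,2) by blast
qed

lemma diag_prodS_form_mult:
  assumes "diag_prodS_form M" "diag_prodS_form N"
  shows "diag_prodS_form (m2_mult M N)"
proof -
  obtain u v as where M: "u dvd 1" "v dvd 1" "M = m2_mult (M2 u 0 0 v) (prodS as)"
    using assms(1) unfolding diag_prodS_form_def by blast
  obtain u2 v2 as2 where N: "u2 dvd 1" "v2 dvd 1" "N = m2_mult (M2 u2 0 0 v2) (prodS as2)"
    using assms(2) unfolding diag_prodS_form_def by blast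
  obtain u3 v3 bs where P: "u3 dvd 1" "v3 dvd 1"
    "m2_mult (prodS as) (M2 u2 0 0 v2) = m2_mult (M2 u3 0 0 v3) (prodS bs)"
    using prodS_mult_unit_diag[OF N(1,2), of as] by blast
  have "m2_mult M N =
      m2_mult (M2 u 0 0 v) (m2_mult (m2_mult (prodS as) (M2 u2 0 0 v2)) (prodS as2))"
    by (simp only: M(3) N(3) m2_mult_assoc)
  also have "\<dots> = m2_mult (M2 (u * u3) 0 0 (v * v3)) (prodS (as2 @ bs))"
    by (simp add: P(3) prodS_append flip: m2_mult_assoc)
  finally show ?thesis
    using diag_prodS_formI[OF unit_mult[OF M(1) P(1)] unit_mult[OF M(2) P(2)]] by simp
qed

lemma diag_prodS_form_inverse:
  assumes "diag_prodS_form M" "m2_mult N M = m2_id"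
  shows "diag_prodS_form N"
proof -
  obtain u v as where M: "u dvd 1" "v dvd 1" "M = m2_mult (M2 u 0 0 v) (prodS as)"
    using assms(1) unfolding diag_prodS_form_def by blast
  obtain u' v' where uv': "u * u' = 1" "v * v' = 1"
    using M(1,2) by (metis dvdE)
  define M' where "M' = m2_mult (prodS (invS as)) (M2 u' 0 0 v')"
  have "diag_prodS_form (M2 u' 0 0 v')"
    using diag_prodS_formI[of u' v' "[]"] uv' by (simp add: mult.commute dvdI)
  moreover have "diag_prodS_form (prodS (invS as))"
    using diag_prodS_formI[of 1 1 "invS as"] by (simp flip: m2_id_def)
  ultimately have "diag_prodS_form M'"
    unfolding M'_def using diag_prodS_form_mult by blast
  have "m2_mult M M' =
      m2_mult (M2 u 0 0 v) (m2_mult (m2_mult (prodS as) (prodS (invS as))) (M2 u' 0 0 v'))"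
    by (simp add: M(3) M'_def m2_mult_assoc)
  also have "\<dots> = m2_id"
    using uv' by (simp add: prodS_invS m2_id_def)
  finally show ?thesis
    using \<open>diag_prodS_form M'\<close> assms(2) m2_inverse_unique by metis
qed

lemma S_mat_in_E_D: "S_mat x \<in> E_D_generated"
proof -
  have "S_mat x = m2_mult (elem12 x)
      (m2_mult (elem12 1) (m2_mult (elem21 (- 1)) (m2_mult (elem12 1) (M2 (- 1) 0 0 1))))"
    by (simp add: S_mat_def elem12_def elem21_def)
  then show ?thesis
    by (simp add: E_D_generated.gen_mult E_D_generated.gen_e12 E_D_generated.gen_e21
        E_D_generated.gen_diag)
qed

lemma prodS_in_E_D: "prodS as \<in> E_D_generated"
  by (induction as) (auto intro: E_D_generated.intros S_mat_in_E_D)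

lemma E_D_generated_iff_diag_prodS_form: "M \<in> E_D_generated \<longleftrightarrow> diag_prodS_form M"
proof
  assume "M \<in> E_D_generated"
  then show "diag_prodS_form M"
  proof (induction rule: E_D_generated.induct)
    case gen_id
    then show ?case using diag_prodS_formI[of 1 1 "[]"] by (simp add: m2_id_def)
  next
    case (gen_e12 x)
    then show ?case using diag_prodS_formI[of 1 1 "[0, x]"] by (simp flip: m2_id_def prodS_elem12)
  next
    case (gen_e21 x)
    then show ?case using diag_prodS_formI[of 1 1 "[x, 0]"] by (simp flip: m2_id_def prodS_elem21)
  next
    case (gen_diag u v)
    then show ?case using diag_prodS_formI[of u v "[]"] by simp
  next
    case (gen_mult M N)
    then show ?case by (simp add: diag_prodS_form_mult)
  next
    case (gen_inv M N)
    then show ?case using diag_prodS_form_inverse by blast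
  qed
next
  assume "diag_prodS_form M"
  then show "M \<in> E_D_generated"
    unfolding diag_prodS_form_def
    by (auto intro: E_D_generated.gen_mult E_D_generated.gen_diag prodS_in_E_D)
qed

lemma lower_triangular_diag_prodS_form:
  assumes "in_GL2 (M2 c 0 r s)"
  shows "diag_prodS_form (M2 c 0 r s)"
proof -
  obtain t where t: "s * t = 1"
    using lower_triangular_in_GL2_units(2)[OF assms] by (metis dvdE)
  have "s * (r * t) = r"
    using t by (simp add: mult.left_commute)
  then have "M2 c 0 r s = m2_mult (M2 c 0 0 s) (elem21 (r * t))"
    by (simp add: elem21_def)
  also have "\<dots> = m2_mult (M2 c 0 0 s) (prodS [r * t, 0])"
    by (simp only: prodS_elem21)
  also have "diag_prodS_form \<dots>"
    by (rule diag_prodS_formI[OF lower_triangular_in_GL2_units[OF assms]])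
  finally show ?thesis .
qed

lemma GE2_ring_iff:
  "GE2_ring (T :: 'a::comm_ring_1 itself) \<longleftrightarrow>
     (\<forall>u :: 'a \<times> 'a. unimodular u \<longrightarrow> in_infty_S_orbit u)"
proof
  assume GE2: "GE2_ring T"
  show "\<forall>u :: 'a \<times> 'a. unimodular u \<longrightarrow> in_infty_S_orbit u"
  proof (intro allI impI)
    fix u :: "'a \<times> 'a"
    assume "unimodular u"
    then obtain M where "in_GL2 M" and u: "row_act infty_row M = u"
      using unimodular_row_in_GL2 by (metis prod.collapse)
    then have "diag_prodS_form M"
      using GE2 E_D_generated_iff_diag_prodS_form unfolding GE2_ring_def by blast
    then obtain c d as where c: "c dvd 1" and M: "M = m2_mult (M2 c 0 0 d) (prodS as)"
      unfolding diag_prodS_form_def by blast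
    have "u = row_scale c (row_act infty_row (prodS as))"
      by (simp add: u[symmetric] M row_act_m2_mult row_scale_row_act row_act_infty_row)
    then show "in_infty_S_orbit u"
      unfolding in_infty_S_orbit_def using c row_class_row_scale by blast
  qed
next
  assume orbit: "\<forall>u :: 'a \<times> 'a. unimodular u \<longrightarrow> in_infty_S_orbit u"
  show "GE2_ring T"
    unfolding GE2_ring_def E_D_generated_iff_diag_prodS_form
  proof (intro allI impI)
    fix M :: "'a m2"
    assume M: "in_GL2 M"
    then obtain c as where "row_act infty_row M = row_scale c (row_act infty_row (prodS as))"
      using orbit unimodular_first_row_if_in_GL2 unfolding in_infty_S_orbit_def row_class_eq_iff
      by blast
    then have "row_act infty_row (m2_mult M (prodS (invS as))) = (c, 0)"
      by (simp add: row_act_m2_mult row_scale_row_act)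
        (simp add: prodS_invS flip: row_act_m2_mult)
    then obtain r s where K: "m2_mult M (prodS (invS as)) = M2 c 0 r s"
      by (cases "m2_mult M (prodS (invS as))") (simp add: row_act_infty_row)
    then have "diag_prodS_form (M2 c 0 r s)"
      using in_GL2_m2_mult[OF M in_GL2_prodS, of "invS as"] lower_triangular_diag_prodS_form
      by simp
    moreover have "M = m2_mult (M2 c 0 r s) (prodS as)"
      by (simp add: m2_mult_assoc prodS_invS flip: K)
    moreover have "diag_prodS_form (prodS as)"
      using diag_prodS_formI[of 1 1 as] by (simp flip: m2_id_def)
    ultimately show "diag_prodS_form M"
      using diag_prodS_form_mult by simp
  qed
qed

theorem proposition3p7:
  fixes T :: "'a::comm_ring_1 itself"
  shows "(Gamma_path_connected T \<longleftrightarrow>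
           (\<forall>a b::'a. unimodular (a, b) \<longrightarrow>
              (\<exists>as. as \<noteq> [] \<and> row_class (a, b) = row_class (row_act infty_row (prodS as)))))
       \<and> ((\<forall>a b::'a. unimodular (a, b) \<longrightarrow>
              (\<exists>as. as \<noteq> [] \<and> row_class (a, b) = row_class (row_act infty_row (prodS as))))
           \<longleftrightarrow> (\<forall>a b::'a. unimodular (a, b) \<longrightarrow> weak_euclid a b))
       \<and> ((\<forall>a b::'a. unimodular (a, b) \<longrightarrow> weak_euclid a b) \<longleftrightarrow> GE2_ring T)"
proof -
  let ?orbit = "\<forall>a b::'a. unimodular (a, b) \<longrightarrow> in_infty_S_orbit (a, b)"
  have "Gamma_path_connected T \<longleftrightarrow> ?orbit"
    by (simp add: Gamma_path_connected_iff)
  moreover have "GE2_ring T \<longleftrightarrow> ?orbit"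
    by (simp add: GE2_ring_iff)
  moreover have "(\<forall>a b::'a. unimodular (a, b) \<longrightarrow>
      (\<exists>as. as \<noteq> [] \<and> row_class (a, b) = row_class (row_act infty_row (prodS as)))) \<longleftrightarrow> ?orbit"
    by (simp add: in_infty_S_orbit_iff_nonempty)
  moreover have "(\<forall>a b::'a. unimodular (a, b) \<longrightarrow> weak_euclid a b) \<longleftrightarrow> ?orbit"
    using unimodular_weak_euclid_iff by blast
  ultimately show ?thesis
    by simp
qed

end
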